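(* Let $F(u,v)=\sum_{p,q\geq1}F_{p,q}(t)u^pv^q=\sum_{n\geq1}f_n(u,v)t^n$, where $F_{p,q}(t)=\sum_{n\geq1}|\{e\in\mathbf{I}_n(\mathcal{AW}): e\text{ has parameters }(p,q)\}|\,t^n$. Then $$F(u,v)=tuv+\frac{tuv}{v-u}\bigl(F(v,1)-F(u,1)\bigr)+\frac{tuv}{1-u}\bigl(F(u,1)-F(u,u)\bigr).$$ Equivalently, $f_1(u,v)=uv$ and for $n\geq2$, $$f_n(u,v)=\frac{uv}{v-u}\bigl(f_{n-1}(v,1)-f_{n-1}(u,1)\bigr)+\frac{uv}{1-u}\bigl(f_{n-1}(u,1)-f_{n-1}(u,u)\bigr).$$
   Context: $\mathbf{I}_n$ is the set of inversion sequences $e=(e_1,\ldots,e_n)$ with $0\leq e_i<i$. $\mathbf{I}_n(\mathcal{AW})$ is the set of $e\in\mathbf{I}_n$ such that $e_i\leq\max\{e_{i-2},e_{i-1}\}+1$ for every $2<i\leq n$. The parameters of $e\in\mathbf{I}_n(\mathcal{AW})$ are $(p,q)$ with $p=e_n+1$ and $q=\max\{e_{n-1},e_n\}+1-e_n$, using the convention $e_0=0$. Each $f_n(u,v)$ is a polynomial in $u,v$. *)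

theory Defs
  imports Complex_Main
begin

text \<open>Sequences e = (e_1,...,e_n) are lists of length n; entry e_i is e ! (i - 1).
  The accessor ent uses the convention e_0 = 0.\<close>

definition ent :: "nat list \<Rightarrow> nat \<Rightarrow> nat" where
  "ent e i = (if i = 0 then 0 else e ! (i - 1))"

definition inv_seqs :: "nat \<Rightarrow> nat list set" where
  "inv_seqs n = {e. length e = n \<and> (\<forall>i\<in>{1..n}. ent e i < i)}"

definition AW_seqs :: "nat \<Rightarrow> nat list set" where
  "AW_seqs n = {e \<in> inv_seqs n.
     \<forall>i. 2 < i \<and> i \<le> n \<longrightarrow> ent e i \<le> max (ent e (i - 2)) (ent e (i - 1)) + 1}"

definition par_p :: "nat list \<Rightarrow> nat" where
  "par_p e = ent e (length e) + 1"

definition par_q :: "nat list \<Rightarrow> nat" where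
  "par_q e = max (ent e (length e - 1)) (ent e (length e)) + 1 - ent e (length e)"

definition f_AW :: "nat \<Rightarrow> real \<Rightarrow> real \<Rightarrow> real" where
  "f_AW n u v = (\<Sum>e\<in>AW_seqs n. u ^ par_p e * v ^ par_q e)"

end

theory Submission
  imports Defs
begin

text \<open>Every sequence in \<open>I\<^sub>n\<^sub>+\<^sub>1(AW)\<close> arises uniquely by appending a last entry
  \<open>x \<le> max(e\<^sub>n\<^sub>-\<^sub>1, e\<^sub>n) + 1\<close> to some \<open>e \<in> I\<^sub>n(AW)\<close>. The new parameters are
  \<open>p' = x + 1\<close> and \<open>q' = max(e\<^sub>n, x) + 1 - x\<close>, so summing \<open>u\<^sup>p\<^sup>' v\<^sup>q\<^sup>'\<close> over the admissible \<open>x\<close>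
  splits into a homogeneous geometric sum in \<open>u, v\<close> (for \<open>x \<le> e\<^sub>n\<close>) and a geometric sum
  in \<open>u\<close> alone (for \<open>x > e\<^sub>n\<close>). In terms of the parameters \<open>(p, q)\<close> of \<open>e\<close> the two sums
  evaluate to \<open>uv (v\<^sup>p - u\<^sup>p)/(v - u)\<close> and \<open>uv (u\<^sup>p - u\<^sup>p u\<^sup>q)/(1 - u)\<close>.\<close>

definition tail_max :: "nat list \<Rightarrow> nat" where
  "tail_max e = max (ent e (length e - 1)) (ent e (length e))"

lemma ent_append_le: "i \<le> length e \<Longrightarrow> ent (e @ [x]) i = ent e i"
  by (auto simp: ent_def nth_append)

lemma ent_append_last: "ent (e @ [x]) (Suc (length e)) = x"
  by (simp add: ent_def)

lemma par_p_append: "par_p (e @ [x]) = x + 1"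
  by (simp add: par_p_def ent_append_last)

lemma par_q_append: "par_q (e @ [x]) = max (ent e (length e)) x + 1 - x"
  by (simp add: par_q_def ent_append_le ent_append_last)

lemma par_q_eq_tail_max: "par_q e = tail_max e + 1 - ent e (length e)"
  by (simp add: par_q_def tail_max_def)

lemma inv_seqs_append_iff:
  "e @ [x] \<in> inv_seqs (Suc (length e)) \<longleftrightarrow> e \<in> inv_seqs (length e) \<and> x \<le> length e"
proof -
  have "{1..Suc (length e)} = insert (Suc (length e)) {1..length e}" by auto
  moreover have "(\<forall>i\<in>{1..length e}. ent (e @ [x]) i < i) \<longleftrightarrow> (\<forall>i\<in>{1..length e}. ent e i < i)"
    by (simp add: ent_append_le)
  ultimately show ?thesis
    by (auto simp: inv_seqs_def ent_append_last)
qed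

lemma ent_le_pred:
  assumes "e \<in> inv_seqs m" "i \<le> m"
  shows "ent e i \<le> i - 1"
proof (cases "i = 0")
  case False
  with assms have "ent e i < i" by (simp add: inv_seqs_def)
  then show ?thesis by simp
qed (simp add: ent_def)

lemma tail_max_le: "e \<in> inv_seqs m \<Longrightarrow> tail_max e \<le> m - 1"
  using ent_le_pred[of e m "m - 1"] ent_le_pred[of e m m]
  by (auto simp: tail_max_def inv_seqs_def)

lemma AW_seqs_length: "e \<in> AW_seqs n \<Longrightarrow> length e = n"
  by (simp add: AW_seqs_def inv_seqs_def)

lemma AW_seqs_append_iff:
  assumes "1 \<le> length e"
  shows "e @ [x] \<in> AW_seqs (Suc (length e)) \<longleftrightarrow> e \<in> AW_seqs (length e) \<and> x \<le> tail_max e + 1"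
proof -
  let ?m = "length e"
  let ?AW = "\<lambda>e n. \<forall>i. 2 < i \<and> i \<le> n \<longrightarrow> ent e i \<le> max (ent e (i - 2)) (ent e (i - 1)) + 1"
  have AW_append: "?AW (e @ [x]) (Suc ?m) \<longleftrightarrow> ?AW e ?m \<and> (2 \<le> ?m \<longrightarrow> x \<le> tail_max e + 1)"
  proof -
    have last: "ent (e @ [x]) (Suc ?m) \<le> max (ent (e @ [x]) (Suc ?m - 2)) (ent (e @ [x]) (Suc ?m - 1)) + 1
        \<longleftrightarrow> x \<le> tail_max e + 1"
      using assms by (simp add: ent_append_last ent_append_le tail_max_def numeral_2_eq_2)
    have ent_eq: "ent (e @ [x]) j = ent e j" if "2 < i" "i \<le> ?m" "j \<in> {i, i - 2, i - 1}" for i j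
      using that by (auto intro: ent_append_le)
    have AW_prefix: "?AW (e @ [x]) ?m \<longleftrightarrow> ?AW e ?m"
      using ent_eq by (metis insertCI)
    have AW_Suc: "?AW e' (Suc ?m) \<longleftrightarrow> ?AW e' ?m \<and> (2 < Suc ?m \<longrightarrow>
        ent e' (Suc ?m) \<le> max (ent e' (Suc ?m - 2)) (ent e' (Suc ?m - 1)) + 1)" for e'
      by (metis le_SucE le_SucI order_refl)
    show ?thesis
      unfolding AW_Suc[of "e @ [x]"] AW_prefix last by (simp add: numeral_2_eq_2 Suc_le_eq)
  qed
  have bound: "x \<le> ?m" if "e \<in> inv_seqs ?m" "x \<le> tail_max e + 1"
    using that tail_max_le[of e ?m] assms by linarith
  show ?thesis
  proof (cases "2 \<le> ?m")
    case False
    \<comment> \<open>For \<open>e = [0]\<close> the AW condition is void; \<open>x \<le> 1\<close> is still the same bound.\<close>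
    with assms have "?m = 1" by simp
    then have "x \<le> ?m \<longleftrightarrow> x \<le> tail_max e + 1" if "e \<in> inv_seqs ?m"
      using that by (auto simp: inv_seqs_def tail_max_def ent_def)
    with False show ?thesis
      unfolding AW_seqs_def mem_Collect_eq inv_seqs_append_iff AW_append by blast
  qed (unfold AW_seqs_def mem_Collect_eq inv_seqs_append_iff AW_append, use bound in blast)
qed

lemma AW_seqs_Suc:
  assumes "1 \<le> m"
  shows "AW_seqs (Suc m) = (\<lambda>(e, x). e @ [x]) ` (SIGMA e:AW_seqs m. {..tail_max e + 1})"
proof (intro equalityI subsetI)
  fix e' assume e': "e' \<in> AW_seqs (Suc m)"
  then obtain e x where ex: "e' = e @ [x]"
    using AW_seqs_length by (metis length_Suc_conv_rev)
  with e' have "length e = m" using AW_seqs_length by fastforce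
  with e' ex assms have "e \<in> AW_seqs m" "x \<le> tail_max e + 1"
    using AW_seqs_append_iff[of e x] by auto
  with ex show "e' \<in> (\<lambda>(e, x). e @ [x]) ` (SIGMA e:AW_seqs m. {..tail_max e + 1})"
    by auto
next
  fix e' assume "e' \<in> (\<lambda>(e, x). e @ [x]) ` (SIGMA e:AW_seqs m. {..tail_max e + 1})"
  then obtain e x where "e' = e @ [x]" "e \<in> AW_seqs m" "x \<le> tail_max e + 1"
    by auto
  with assms show "e' \<in> AW_seqs (Suc m)"
    using AW_seqs_append_iff[of e x] AW_seqs_length[of e m] by auto
qed

lemma AW_seqs_one: "AW_seqs 1 = {[0]}"
proof -
  have "e = [0]" if "e \<in> AW_seqs 1" for e
    using that by (cases e) (auto simp: AW_seqs_def inv_seqs_def ent_def)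
  thus ?thesis by (auto simp: AW_seqs_def inv_seqs_def ent_def)
qed

lemma finite_AW_seqs: "finite (AW_seqs n)"
proof (rule finite_subset)
  show "AW_seqs n \<subseteq> {xs. set xs \<subseteq> {..<n} \<and> length xs = n}"
  proof (rule subsetI, intro CollectI conjI)
    fix e assume e: "e \<in> AW_seqs n"
    then show "length e = n" by (rule AW_seqs_length)
    show "set e \<subseteq> {..<n}"
    proof
      fix y assume "y \<in> set e"
      then obtain j where j: "j < n" "e ! j = y"
        using e by (auto simp: in_set_conv_nth AW_seqs_length)
      have "ent e (Suc j) < Suc j" using e j by (auto simp: AW_seqs_def inv_seqs_def)
      with j show "y \<in> {..<n}" by (simp add: ent_def)
    qed
  qed
  show "finite {xs. set xs \<subseteq> {..<n} \<and> length xs = n}"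
    by (simp add: finite_lists_length_eq)
qed

lemma sum_AW_seqs_Suc:
  assumes "1 \<le> m"
  shows "(\<Sum>e'\<in>AW_seqs (Suc m). g e') = (\<Sum>e\<in>AW_seqs m. \<Sum>x\<le>tail_max e + 1. g (e @ [x]))"
proof -
  have "inj_on (\<lambda>(e, x). e @ [x]) (SIGMA e:AW_seqs m. {..tail_max e + 1})"
    by (auto simp: inj_on_def)
  hence "(\<Sum>e'\<in>AW_seqs (Suc m). g e') = (\<Sum>(e, x)\<in>(SIGMA e:AW_seqs m. {..tail_max e + 1}). g (e @ [x]))"
    by (simp add: AW_seqs_Suc[OF assms] sum.reindex case_prod_unfold)
  also have "\<dots> = (\<Sum>e\<in>AW_seqs m. \<Sum>x\<le>tail_max e + 1. g (e @ [x]))"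
    by (rule sum.Sigma[symmetric]) (simp_all add: finite_AW_seqs)
  finally show ?thesis .
qed

lemma sum_extension_weights:
  fixes u v :: "'a::field"
  assumes "u \<noteq> v" "u \<noteq> 1" "a \<le> M"
  shows "(\<Sum>x\<le>M + 1. u ^ (x + 1) * v ^ (max a x + 1 - x)) =
    u * v / (v - u) * (v ^ (a + 1) - u ^ (a + 1))
    + u * v / (1 - u) * (u ^ (a + 1) - u ^ (a + 1) * u ^ (M + 1 - a))"
proof -
  let ?w = "\<lambda>x. u ^ (x + 1) * v ^ (max a x + 1 - x)"
  have split: "{..M + 1} = {..<Suc a} \<union> {a + 1..a + 1 + (M - a)}"
    "{..<Suc a} \<inter> {a + 1..a + 1 + (M - a)} = {}"
    using assms(3) by auto
  have "sum ?w {..<Suc a} = (\<Sum>x<Suc a. u * v * (u ^ x * v ^ (a - x)))"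
    by (intro sum.cong) (auto simp: max_def Suc_diff_le)
  also have "\<dots> = u * v * (\<Sum>x<Suc a. u ^ x * v ^ (a - x))"
    by (rule sum_distrib_left[symmetric])
  also have "\<dots> = u * v / (v - u) * ((v - u) * (\<Sum>x<Suc a. u ^ x * v ^ (a - x)))"
    using assms(1) by simp
  also have "(v - u) * (\<Sum>x<Suc a. u ^ x * v ^ (a - x)) = - (u ^ Suc a - v ^ Suc a)"
    by (simp only: diff_power_eq_sum minus_diff_eq mult_minus_left[symmetric])
  also have "\<dots> = v ^ (a + 1) - u ^ (a + 1)"
    by simp
  finally have low: "sum ?w {..<Suc a} = u * v / (v - u) * (v ^ (a + 1) - u ^ (a + 1))" .
  have "sum ?w {a + 1..a + 1 + (M - a)} = (\<Sum>x=a + 1..a + 1 + (M - a). u * v * u ^ x)"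
    by (intro sum.cong) (auto simp: max_def)
  also have "\<dots> = u * v * (\<Sum>x=a + 1..a + 1 + (M - a). u ^ x)"
    by (rule sum_distrib_left[symmetric])
  also have "\<dots> = u * v * (u ^ (a + 1) * (1 - u ^ Suc (M - a)) / (1 - u))"
    using sum_gp_offset[of u "a + 1" "M - a"] by (simp only: assms(2) if_False)
  also have "\<dots> = u * v / (1 - u) * (u ^ (a + 1) - u ^ (a + 1) * u ^ (M + 1 - a))"
    using assms(3) by (simp add: Suc_diff_le right_diff_distrib diff_divide_distrib)
  finally have high: "sum ?w {a + 1..a + 1 + (M - a)}
      = u * v / (1 - u) * (u ^ (a + 1) - u ^ (a + 1) * u ^ (M + 1 - a))" .
  show ?thesis
    by (simp only: split sum.union_disjoint finite_lessThan finite_atLeastAtMost low high)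
qed

lemma f_AW_Suc:
  assumes "1 \<le> m" "u \<noteq> v" "u \<noteq> 1"
  shows "f_AW (Suc m) u v = u * v / (v - u) * (f_AW m v 1 - f_AW m u 1)
                          + u * v / (1 - u) * (f_AW m u 1 - f_AW m u u)"
proof -
  have "f_AW (Suc m) u v = (\<Sum>e\<in>AW_seqs m. \<Sum>x\<le>tail_max e + 1.
          u ^ (x + 1) * v ^ (max (ent e (length e)) x + 1 - x))"
    by (simp add: f_AW_def sum_AW_seqs_Suc[OF assms(1)] par_p_append par_q_append)
  also have "\<dots> = (\<Sum>e\<in>AW_seqs m. u * v / (v - u) * (v ^ par_p e - u ^ par_p e)
          + u * v / (1 - u) * (u ^ par_p e - u ^ par_p e * u ^ par_q e))"
  proof (rule sum.cong[OF refl])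
    fix e
    have "ent e (length e) \<le> tail_max e" by (simp add: tail_max_def)
    then show "(\<Sum>x\<le>tail_max e + 1. u ^ (x + 1) * v ^ (max (ent e (length e)) x + 1 - x)) =
        u * v / (v - u) * (v ^ par_p e - u ^ par_p e)
        + u * v / (1 - u) * (u ^ par_p e - u ^ par_p e * u ^ par_q e)"
      unfolding par_p_def par_q_eq_tail_max by (rule sum_extension_weights[OF assms(2,3)])
  qed
  also have "\<dots> = u * v / (v - u) * (f_AW m v 1 - f_AW m u 1)
          + u * v / (1 - u) * (f_AW m u 1 - f_AW m u u)"
    by (simp add: f_AW_def sum.distrib sum_distrib_left sum_subtractf right_diff_distrib)
  finally show ?thesis .
qed

theorem proposition5p2:
  shows "(\<forall>u v. f_AW 1 u v = u * v) \<and>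
    (\<forall>n u v. 2 \<le> n \<longrightarrow> u \<noteq> v \<longrightarrow> u \<noteq> 1 \<longrightarrow>
       f_AW n u v = u * v / (v - u) * (f_AW (n - 1) v 1 - f_AW (n - 1) u 1)
                  + u * v / (1 - u) * (f_AW (n - 1) u 1 - f_AW (n - 1) u u))"
proof (intro conjI allI impI)
  show "f_AW 1 u v = u * v" for u v
    unfolding f_AW_def AW_seqs_one by (simp add: par_p_def par_q_def ent_def)
next
  fix n :: nat and u v :: real
  assume "2 \<le> n" "u \<noteq> v" "u \<noteq> 1"
  then show "f_AW n u v = u * v / (v - u) * (f_AW (n - 1) v 1 - f_AW (n - 1) u 1)
                  + u * v / (1 - u) * (f_AW (n - 1) u 1 - f_AW (n - 1) u u)"
    using f_AW_Suc[of "n - 1" u v] by simp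
qed

end
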